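(* Let $X$ be a reflexive Banach space over $\mathbb{K}\in\{\mathbb{R},\mathbb{C}\}$, let $W\subset\mathcal{B}$ be a non-empty compact set, and let $\mathcal{U}\subset\mathcal{W}(X)$ be a non-empty convex set. Let $[T]\in\mathcal{W}(X)$, $[L]\in\mathcal{U}$ and $r>0$. Then $[L]$ is a strongly unique best approximation to $[T]$ in $\mathcal{U}$ with constant $r$, i.e. $$\|[T]-[U]\|_W\ge\|[T]-[L]\|_W+r\|[U]-[L]\|_W\quad\text{for all }[U]\in\mathcal{U},$$ if and only if for every $[U]\in\mathcal{U}$ there exists $(x^*,x)\in W_{T-L}$ such that $$\operatorname{re}\big(x^*((U-L)x)\big)\le -r\,\|[U]-[L]\|_W.$$
   Context: $\mathcal{K}(X)$ denotes the space of compact linear operators $X\to X$. $\mathcal{B}=B_{X^*}\times B_X$ carries the product of the weak$^*$ topology on $B_{X^*}$ and the weak topology on $B_X$. For a fixed non-empty compact $W\subset\mathcal{B}$ and $L\in\mathcal{K}(X)$ put $\|L\|_W=\sup\{|x^*(Lx)|:(x^*,x)\in W\}$. $\mathcal{W}(X)$ is the quotient of $\mathcal{K}(X)$ by $L\sim T\iff\|L-T\|_W=0$, normed by $\|[L]\|_W=\|L\|_W$. In the complex case $Z=\bigcup_{\theta\in[0,2\pi]}\{(e^{i\theta}x^*,x):(x^*,x)\in W\}$; in the real case $Z=W\cup\{(-x^*,x):(x^*,x)\in W\}$. For $[S]\in\mathcal{W}(X)$, $W_S=\{(x^*,x)\in Z: x^*(Sx)=\|[S]\|_W\}$. The values $x^*(Sx)$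 for $(x^*,x)\in Z$ do not depend on the chosen representatives. $\operatorname{re}$ denotes the real part. *)

theory Defs
  imports "HOL-Analysis.Analysis"
begin

text \<open>A normed space over a scalar field K (K = real or K = complex), given as a real
  normed space together with a K-scalar multiplication extending the real one.\<close>
definition K_space :: "('k::real_normed_field \<Rightarrow> 'a::real_normed_vector \<Rightarrow> 'a) \<Rightarrow> bool" where
  "K_space sm \<longleftrightarrow>
     (\<forall>t x. sm (of_real t) x = scaleR t x) \<and>
     (\<forall>a b x. sm (a * b) x = sm a (sm b x)) \<and>
     (\<forall>a b x. sm (a + b) x = sm a x + sm b x) \<and>
     (\<forall>a x y. sm a (x + y) = sm a x + sm a y) \<and>
     (\<forall>a x. norm (sm a x) = norm a * norm x)"

definition K_linear :: "('k::real_normed_field \<Rightarrow> 'a::real_normed_vector \<Rightarrow> 'a) \<Rightarrow> ('a \<Rightarrow> 'k) \<Rightarrow> bool" where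
  "K_linear sm f \<longleftrightarrow> (\<forall>x y. f (x + y) = f x + f y) \<and> (\<forall>c x. f (sm c x) = c * f x)"

definition K_dual :: "('k::real_normed_field \<Rightarrow> 'a::real_normed_vector \<Rightarrow> 'a) \<Rightarrow> ('a \<Rightarrow> 'k) set" where
  "K_dual sm = {f. K_linear sm f \<and> (\<exists>B. \<forall>x. norm (f x) \<le> B * norm x)}"

definition dual_ball :: "('k::real_normed_field \<Rightarrow> 'a::real_normed_vector \<Rightarrow> 'a) \<Rightarrow> ('a \<Rightarrow> 'k) set" where
  "dual_ball sm = {f \<in> K_dual sm. \<forall>x. norm (f x) \<le> norm x}"

definition unit_ball :: "'a::real_normed_vector set" where
  "unit_ball = {x. norm x \<le> 1}"

definition K_reflexive :: "('k::real_normed_field \<Rightarrow> 'a::real_normed_vector \<Rightarrow> 'a) \<Rightarrow> bool" where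
  "K_reflexive sm \<longleftrightarrow>
     (\<forall>\<Phi> :: ('a \<Rightarrow> 'k) \<Rightarrow> 'k.
        (\<forall>f\<in>K_dual sm. \<forall>g\<in>K_dual sm. \<Phi> (\<lambda>x. f x + g x) = \<Phi> f + \<Phi> g) \<and>
        (\<forall>f\<in>K_dual sm. \<forall>c. \<Phi> (\<lambda>x. c * f x) = c * \<Phi> f) \<and>
        (\<exists>B. \<forall>f\<in>K_dual sm. norm (\<Phi> f) \<le> B * onorm f)
        \<longrightarrow> (\<exists>x. \<forall>f\<in>K_dual sm. \<Phi> f = f x))"

definition weak_star_ball_top :: "('k::real_normed_field \<Rightarrow> 'a::real_normed_vector \<Rightarrow> 'a) \<Rightarrow> ('a \<Rightarrow> 'k) topology" where
  "weak_star_ball_top sm =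
     topology_generated_by {{f \<in> dual_ball sm. f y \<in> V} | y V. open V}"

definition weak_ball_top :: "('k::real_normed_field \<Rightarrow> 'a::real_normed_vector \<Rightarrow> 'a) \<Rightarrow> 'a topology" where
  "weak_ball_top sm =
     topology_generated_by {{x \<in> unit_ball. g x \<in> V} | g V. g \<in> K_dual sm \<and> open V}"

definition B_top :: "('k::real_normed_field \<Rightarrow> 'a::real_normed_vector \<Rightarrow> 'a) \<Rightarrow> (('a \<Rightarrow> 'k) \<times> 'a) topology" where
  "B_top sm = prod_topology (weak_star_ball_top sm) (weak_ball_top sm)"

definition compact_op :: "('k::real_normed_field \<Rightarrow> 'a::real_normed_vector \<Rightarrow> 'a) \<Rightarrow> ('a \<Rightarrow> 'a) \<Rightarrow> bool" where
  "compact_op sm L \<longleftrightarrow>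
     (\<forall>x y. L (x + y) = L x + L y) \<and> (\<forall>c x. L (sm c x) = sm c (L x)) \<and>
     compact (closure (L ` unit_ball))"

definition normW :: "(('a \<Rightarrow> 'k::real_normed_field) \<times> 'a) set \<Rightarrow> ('a \<Rightarrow> 'a) \<Rightarrow> real" where
  "normW W L = Sup ((\<lambda>(f, x). norm (f (L x))) ` W)"

text \<open>The set Z: rotations of W by unimodular scalars (c = \<plusminus>1 if K = real,
  c = e^{i\<theta>} if K = complex).\<close>
definition Zset :: "(('a \<Rightarrow> 'k::real_normed_field) \<times> 'a) set \<Rightarrow> (('a \<Rightarrow> 'k) \<times> 'a) set" where
  "Zset W = {((\<lambda>y. c * f y), x) | c f x. (f, x) \<in> W \<and> norm c = 1}"

definition WS :: "(('a \<Rightarrow> 'k::real_normed_field) \<times> 'a) set \<Rightarrow> ('a \<Rightarrow> 'a) \<Rightarrow> (('a \<Rightarrow> 'k) \<times> 'a) set" where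
  "WS W S = {(f, x) \<in> Zset W. f (S x) = of_real (normW W S)}"

text \<open>The standing hypotheses of the theorem (all classes in \<W>(X) are handled through
  representatives in \<K>(X)).\<close>
definition thm_setting ::
  "('k::real_normed_field \<Rightarrow> 'a::banach \<Rightarrow> 'a) \<Rightarrow> (('a \<Rightarrow> 'k) \<times> 'a) set \<Rightarrow> ('a \<Rightarrow> 'a) set
    \<Rightarrow> ('a \<Rightarrow> 'a) \<Rightarrow> ('a \<Rightarrow> 'a) \<Rightarrow> real \<Rightarrow> bool" where
  "thm_setting sm W \<U> T L r \<longleftrightarrow>
     K_space sm \<and> K_reflexive sm \<and>
     W \<noteq> {} \<and> W \<subseteq> dual_ball sm \<times> unit_ball \<and> compactin (B_top sm) W \<and>
     \<U> \<noteq> {} \<and> (\<forall>U\<in>\<U>. compact_op sm U) \<and>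
     (\<forall>A\<in>\<U>. \<forall>B\<in>\<U>. \<forall>t::real. 0 \<le> t \<and> t \<le> 1 \<longrightarrow>
        (\<lambda>x. scaleR t (A x) + scaleR (1 - t) (B x)) \<in> \<U>) \<and>
     compact_op sm T \<and> L \<in> \<U> \<and> r > 0"

end

theory Submission imports Defs begin

(* Writing S = T - L and D = U - L, the inequality for U reads
   normW (S - D) >= normW S + r normW D.

   Sufficiency is a one-line estimate at a point (f, x) of W_S.  For necessity, apply the
   inequality to the convex combinations U_t = t U + (1 - t) L, i.e. to S - t D, and evaluate
   at a point of W where normW (S - t D) is attained, rotated by a unimodular scalar c so that
   c * g ((S - tD) x) is real: this gives a point with re (c g (D x)) <= - r normW D and
   re (c g (S x)) >= normW S - t normW D.  Letting t -> 0 and using compactness of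
   {|c| = 1} x W yields a point where both inequalities hold with t = 0; there c g (S x) is
   forced to equal normW S, so ((c g), x) lies in W_S.

   Compactness enters through the joint continuity of (g, x) |-> g (A x) on the weak*-weak
   product topology for operators A with relatively compact image of the unit ball.  The real
   and the complex case are treated uniformly via an abstract "real part" functional re. *)

section \<open>The weak*-weak product topology\<close>

lemma topspace_weak_star_ball_top: "topspace (weak_star_ball_top sm) = dual_ball sm"
  unfolding weak_star_ball_top_def topology_generated_by_topspace by auto

lemma zero_in_K_dual: "(\<lambda>x. 0) \<in> K_dual sm"
  unfolding K_dual_def K_linear_def by (auto intro: exI[of _ 0])

lemma topspace_weak_ball_top: "topspace (weak_ball_top sm) = unit_ball"
  unfolding weak_ball_top_def topology_generated_by_topspace using zero_in_K_dual by blast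

lemma topspace_B_top: "topspace (B_top sm) = dual_ball sm \<times> unit_ball"
  by (simp add: B_top_def topspace_weak_star_ball_top topspace_weak_ball_top)

lemma openin_weak_star_eval:
  "openin (weak_star_ball_top sm) {g \<in> dual_ball sm. g y \<in> V}" if "open V"
  unfolding weak_star_ball_top_def using that by (intro topology_generated_by_Basis) blast

lemma openin_weak_eval:
  "openin (weak_ball_top sm) {x \<in> unit_ball. h x \<in> V}" if "h \<in> K_dual sm" "open V"
  unfolding weak_ball_top_def using that by (intro topology_generated_by_Basis) blast

lemma additive_diff:
  fixes f :: "'a::ab_group_add \<Rightarrow> 'b::ab_group_add"
  assumes "\<And>x y. f (x + y) = f x + f y"
  shows "f (x - y) = f x - f y"
  using assms[of "x - y" y] by (simp add: eq_diff_eq)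

lemma K_space_scaleR: "K_space sm \<Longrightarrow> sm (of_real t) x = t *\<^sub>R x"
  unfolding K_space_def by blast

lemma K_dual_add: "g \<in> K_dual sm \<Longrightarrow> g (x + y) = g x + g y"
  unfolding K_dual_def K_linear_def by auto

lemma K_dual_diff: "g \<in> K_dual sm \<Longrightarrow> g (x - y) = g x - g y"
  using additive_diff[of g] K_dual_add by metis

lemma K_dual_scaleR:
  assumes "K_space sm" "g \<in> K_dual sm"
  shows "g (t *\<^sub>R x) = of_real t * g x"
proof -
  have "g (sm (of_real t) x) = of_real t * g x" using assms(2) unfolding K_dual_def K_linear_def by blast
  then show ?thesis using K_space_scaleR[OF assms(1)] by simp
qed

lemma dual_ball_le: "g \<in> dual_ball sm \<Longrightarrow> norm (g x) \<le> norm x"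
  unfolding dual_ball_def by auto

lemma dual_ball_K_dual: "g \<in> dual_ball sm \<Longrightarrow> g \<in> K_dual sm"
  unfolding dual_ball_def by auto

section \<open>Operators with relatively compact image of the unit ball\<close>

text \<open>All that is used of a compact operator: K-linearity and that the image of the unit ball
  lies in some compact set.  Unlike compact_op, this notion is visibly closed under
  differences.\<close>
definition precompact_op :: "('k::real_normed_field \<Rightarrow> 'a::real_normed_vector \<Rightarrow> 'a) \<Rightarrow> ('a \<Rightarrow> 'a) \<Rightarrow> bool" where
  "precompact_op sm A \<longleftrightarrow> (\<forall>x y. A (x + y) = A x + A y) \<and> (\<forall>c x. A (sm c x) = sm c (A x)) \<and>
     (\<exists>C. compact C \<and> A ` unit_ball \<subseteq> C)"

lemma compact_op_precompact: "compact_op sm A \<Longrightarrow> precompact_op sm A"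
  unfolding compact_op_def precompact_op_def by (meson closure_subset)

lemma K_space_diff: "K_space sm \<Longrightarrow> sm c (a - b) = sm c a - sm c b"
  unfolding K_space_def using additive_diff[of "sm c" a b] by blast

text \<open>K-scalars commute with real scalars since K is commutative.\<close>
lemma K_space_scaleR_commute:
  assumes ks: "K_space sm"
  shows "sm c (t *\<^sub>R y) = t *\<^sub>R sm c y"
proof -
  have "sm c (t *\<^sub>R y) = sm (c * of_real t) y" using ks unfolding K_space_def by metis
  also have "\<dots> = sm (of_real t) (sm c y)" using ks unfolding K_space_def by (metis mult.commute)
  finally show ?thesis using K_space_scaleR[OF ks] by simp
qed

lemma precompact_op_diff:
  assumes ks: "K_space sm" and A: "precompact_op sm A" and B: "precompact_op sm B"
  shows "precompact_op sm (\<lambda>x. A x - B x)"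
proof -
  obtain C1 C2 where C: "compact C1" "A ` unit_ball \<subseteq> C1" "compact C2" "B ` unit_ball \<subseteq> C2"
    using A B unfolding precompact_op_def by metis
  have image: "(\<lambda>x. A x - B x) ` unit_ball \<subseteq> {x - y | x y. x \<in> C1 \<and> y \<in> C2}" using C by blast
  have add: "A (x + y) - B (x + y) = A x - B x + (A y - B y)" for x y
    using A B unfolding precompact_op_def by simp
  have hom: "A (sm c x) - B (sm c x) = sm c (A x - B x)" for c x
    using A B K_space_diff[OF ks] unfolding precompact_op_def by simp
  show ?thesis unfolding precompact_op_def
    using add hom image compact_differences[OF C(1,3)] by (intro conjI allI exI) auto
qed

lemma precompact_op_scaleR:
  assumes ks: "K_space sm" and A: "precompact_op sm A"
  shows "precompact_op sm (\<lambda>x. t *\<^sub>R A x)"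
proof -
  obtain C where C: "compact C" "A ` unit_ball \<subseteq> C" using A unfolding precompact_op_def by metis
  have image: "(\<lambda>x. t *\<^sub>R A x) ` unit_ball \<subseteq> scaleR t ` C" using C by blast
  have add: "t *\<^sub>R A (x + y) = t *\<^sub>R A x + t *\<^sub>R A y" for x y
    using A unfolding precompact_op_def by (simp add: scaleR_add_right)
  have hom: "t *\<^sub>R A (sm c x) = sm c (t *\<^sub>R A x)" for c x
    using A K_space_scaleR_commute[OF ks] unfolding precompact_op_def by simp
  show ?thesis unfolding precompact_op_def
    using add hom image compact_scaling[OF C(1)] by (intro conjI allI exI) auto
qed

text \<open>A precompact operator is bounded, by homogeneity and boundedness of its image of the unit ball.\<close>
lemma precompact_op_bounded:
  assumes ks: "K_space sm" and A: "precompact_op sm A"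
  shows "\<exists>M. \<forall>x. norm (A x) \<le> M * norm x"
proof -
  obtain C where C: "compact C" "A ` unit_ball \<subseteq> C" using A unfolding precompact_op_def by metis
  then obtain M where M: "\<And>y. y \<in> C \<Longrightarrow> norm y \<le> M"
    using compact_imp_bounded[OF C(1)] unfolding bounded_iff by blast
  have hom: "A (t *\<^sub>R x) = t *\<^sub>R A x" for t x
    using A K_space_scaleR[OF ks] unfolding precompact_op_def by metis
  have "norm (A x) \<le> M * norm x" for x
  proof (cases "x = 0")
    case True
    then show ?thesis using hom[of 0 0] by simp
  next
    case False
    have "scaleR (1 / norm x) x \<in> unit_ball" unfolding unit_ball_def using False by simp
    then have "norm (A (scaleR (1 / norm x) x)) \<le> M" using C M by blast
    then show ?thesis using False hom[of "1 / norm x" x] by (simp add: field_simps)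
  qed
  then show ?thesis by blast
qed

section \<open>Joint continuity of the evaluation map\<close>

text \<open>The approximation argument behind the continuity of (g, x) \<mapsto> g (A x): for y close to
  A x', the value g' (A x') is close to g' y, which is close to g y for g' near g.\<close>
lemma eval_difference_bound:
  assumes g: "g \<in> dual_ball sm" and g': "g' \<in> dual_ball sm"
  shows "norm (g' v - g u) \<le> 2 * norm (v - y) + norm (g' y - g y) + norm (g v - g u)"
proof -
  have d: "g \<in> K_dual sm" "g' \<in> K_dual sm" using g g' dual_ball_K_dual by auto
  have "g' v - g u = g' (v - y) + (g' y - g y) + g (y - v) + (g v - g u)"
    using K_dual_diff[OF d(1)] K_dual_diff[OF d(2)] by simp
  then have "norm (g' v - g u) \<le> norm (g' (v - y)) + norm (g' y - g y) + norm (g (y - v)) + norm (g v - g u)"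
    by (metis norm_triangle_le add_mono order_refl)
  moreover have "norm (g' (v - y)) \<le> norm (v - y)" "norm (g (y - v)) \<le> norm (v - y)"
    using dual_ball_le[OF g', of "v - y"] dual_ball_le[OF g, of "y - v"] by (auto simp: norm_minus_commute)
  ultimately show ?thesis by linarith
qed

text \<open>g \<circ> A is a bounded functional, so it defines a subbasic weakly open set.\<close>
lemma precompact_op_comp_dual:
  assumes ks: "K_space sm" and A: "precompact_op sm A" and g: "g \<in> dual_ball sm"
  shows "(\<lambda>x. g (A x)) \<in> K_dual sm"
proof -
  obtain M where M: "\<And>x. norm (A x) \<le> M * norm x" using precompact_op_bounded[OF ks A] by blast
  have "norm (g (A x)) \<le> M * norm x" for x using M[of x] dual_ball_le[OF g] order_trans by blast
  moreover have "K_linear sm (\<lambda>x. g (A x))"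
    using A dual_ball_K_dual[OF g] unfolding precompact_op_def K_dual_def K_linear_def by simp
  ultimately show ?thesis unfolding K_dual_def by blast
qed

lemma continuous_eval_B_top:
  assumes ks: "K_space sm" and A: "precompact_op sm A"
  shows "continuous_map (B_top sm) euclidean (\<lambda>(g, x). g (A x))"
  unfolding Met_TC.continuous_map_to_metric[simplified]
proof (intro ballI allI impI)
  fix p and e :: real
  assume p: "p \<in> topspace (B_top sm)" and e: "0 < e"
  obtain g x where pgx: "p = (g, x)" and g: "g \<in> dual_ball sm" and x: "x \<in> unit_ball"
    using p topspace_B_top by (cases p) auto
  obtain C where C: "compact C" "A ` unit_ball \<subseteq> C" using A unfolding precompact_op_def by metis
  obtain Y where Y: "finite Y" "C \<subseteq> (\<Union>y\<in>Y. ball y (e/5))"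
    using C(1) e unfolding compact_eq_totally_bounded by (meson divide_pos_pos zero_less_numeral)
  define U1 where "U1 = (\<Inter>y\<in>Y. {g'\<in>dual_ball sm. g' y \<in> ball (g y) (e/5)}) \<inter> topspace (weak_star_ball_top sm)"
  define U2 where "U2 = {x'\<in>unit_ball. g (A x') \<in> ball (g (A x)) (e/5)}"
  have "openin (weak_star_ball_top sm) U1" unfolding U1_def
    by (intro openin_INT[OF Y(1)] openin_weak_star_eval open_ball)
  moreover have "openin (weak_ball_top sm) U2" unfolding U2_def
    using precompact_op_comp_dual[OF ks A g] by (intro openin_weak_eval) auto
  ultimately have "openin (B_top sm) (U1 \<times> U2)" unfolding B_top_def by (simp add: openin_prod_Times_iff)
  moreover have "p \<in> U1 \<times> U2" using g x e unfolding pgx U1_def U2_def topspace_weak_star_ball_top by auto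
  moreover have "dist ((\<lambda>(g, x). g (A x)) p) ((\<lambda>(g, x). g (A x)) q) < e" if q: "q \<in> U1 \<times> U2" for q
  proof -
    obtain g' x' where qgx: "q = (g', x')" and g': "g' \<in> dual_ball sm" and x': "x' \<in> unit_ball"
      using q unfolding U1_def U2_def topspace_weak_star_ball_top by (cases q) auto
    obtain y where y: "y \<in> Y" "norm (A x' - y) < e/5"
      using C(2) x' Y(2) by (force simp: dist_norm norm_minus_commute)
    have "norm (g' y - g y) < e/5" using q y(1) unfolding qgx U1_def by (auto simp: dist_norm norm_minus_commute)
    moreover have "norm (g (A x') - g (A x)) < e/5" using q unfolding qgx U2_def by (auto simp: dist_norm norm_minus_commute)
    ultimately have "norm (g' (A x') - g (A x)) < e"
      using eval_difference_bound[OF g g', of "A x'" "A x" y] y(2) e by linarith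
    then show ?thesis unfolding pgx qgx by (simp add: dist_norm norm_minus_commute)
  qed
  ultimately show "\<exists>V. openin (B_top sm) V \<and> p \<in> V \<and> (\<forall>q\<in>V. dist ((\<lambda>(g, x). g (A x)) p) ((\<lambda>(g, x). g (A x)) q) < e)"
    by (intro exI[of _ "U1 \<times> U2"]) auto
qed

lemma compactin_attains_max:
  assumes "compactin X K" "K \<noteq> {}" "continuous_map X euclideanreal F"
  shows "\<exists>p\<in>K. \<forall>q\<in>K. F q \<le> F p"
proof -
  have "compact (F ` K)" using image_compactin[OF assms(1,3)] by simp
  then obtain y where "y \<in> F ` K" "\<forall>z\<in>F ` K. z \<le> y"
    using compact_attains_sup assms(2) by (metis image_is_empty)
  then show ?thesis by blast
qed

text \<open>A continuous function on a compact set which takes values \<ge> -\<epsilon> for every \<epsilon> > 0 takes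
  a non-negative value: this is the limit t \<rightarrow> 0 of the main argument.\<close>
lemma compactin_nonneg_value:
  assumes "compactin X K" "K \<noteq> {}" "continuous_map X euclideanreal F"
    and approx: "\<And>\<epsilon>. 0 < \<epsilon> \<Longrightarrow> \<exists>p\<in>K. - \<epsilon> \<le> F p"
  shows "\<exists>p\<in>K. 0 \<le> F p"
proof -
  obtain p where p: "p \<in> K" "\<forall>q\<in>K. F q \<le> F p" using compactin_attains_max[OF assms(1-3)] by blast
  have "0 \<le> F p"
  proof (rule ccontr)
    assume "\<not> 0 \<le> F p"
    then obtain q where "q \<in> K" "F p / 2 \<le> F q" using approx[of "- F p / 2"] by auto
    then show False using p(2) \<open>\<not> 0 \<le> F p\<close> by fastforce
  qed
  then show ?thesis using p(1) by blast
qed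

lemma normW_upper:
  assumes A: "precompact_op sm A" and W: "W \<subseteq> dual_ball sm \<times> unit_ball" and gx: "(g, x) \<in> W"
  shows "norm (g (A x)) \<le> normW W A"
proof -
  obtain C where C: "compact C" "A ` unit_ball \<subseteq> C" using A unfolding precompact_op_def by metis
  then obtain M where M: "\<And>y. y \<in> C \<Longrightarrow> norm y \<le> M"
    using compact_imp_bounded[OF C(1)] unfolding bounded_iff by blast
  have "norm (g' (A x')) \<le> M" if "(g', x') \<in> W" for g' x'
  proof -
    have "g' \<in> dual_ball sm" "x' \<in> unit_ball" using that W by auto
    then show ?thesis using dual_ball_le M C by (meson image_subset_iff order_trans)
  qed
  then have "bdd_above ((\<lambda>(f, x). norm (f (A x))) ` W)" by (intro bdd_aboveI[of _ M]) fastforce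
  then show ?thesis unfolding normW_def using gx by (intro cSup_upper) (auto intro: image_eqI[of _ _ "(g, x)"])
qed

lemma normW_attained:
  assumes ks: "K_space sm" and A: "precompact_op sm A" and W: "W \<subseteq> dual_ball sm \<times> unit_ball"
    and Wc: "compactin (B_top sm) W" and Wne: "W \<noteq> {}"
  shows "\<exists>(g, x) \<in> W. norm (g (A x)) = normW W A"
proof -
  have "continuous_map (B_top sm) euclideanreal (\<lambda>p. norm ((\<lambda>(g, x). g (A x)) p))"
    by (intro continuous_map_norm continuous_eval_B_top[OF ks A])
  from compactin_attains_max[OF Wc Wne this] obtain g x where gx: "(g, x) \<in> W"
    and max: "\<forall>q\<in>W. norm ((\<lambda>(g, x). g (A x)) q) \<le> norm (g (A x))" by auto
  have "normW W A \<le> norm (g (A x))" unfolding normW_def using Wne max by (intro cSup_least) auto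
  then show ?thesis using normW_upper[OF A W gx] gx by fastforce
qed

lemma normW_scaleR:
  assumes ks: "K_space sm" and A: "precompact_op sm A" and W: "W \<subseteq> dual_ball sm \<times> unit_ball"
    and Wc: "compactin (B_top sm) W" and Wne: "W \<noteq> {}" and t: "0 \<le> t"
  shows "normW W (\<lambda>x. t *\<^sub>R A x) = t * normW W A"
proof -
  have eval: "norm (g (t *\<^sub>R A x)) = t * norm (g (A x))" if "(g, x) \<in> W" for g x
  proof -
    have "g \<in> K_dual sm" using that W dual_ball_K_dual by blast
    from K_dual_scaleR[OF ks this, of t "A x"] show ?thesis using t by (simp add: norm_mult)
  qed
  have tA: "precompact_op sm (\<lambda>x. t *\<^sub>R A x)" using precompact_op_scaleR[OF ks A] .
  obtain g x where gx: "(g, x) \<in> W" "norm (g (t *\<^sub>R A x)) = normW W (\<lambda>x. t *\<^sub>R A x)"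
    using normW_attained[OF ks tA W Wc Wne] by auto
  obtain g' x' where g'x': "(g', x') \<in> W" "norm (g' (A x')) = normW W A"
    using normW_attained[OF ks A W Wc Wne] by auto
  have "normW W (\<lambda>x. t *\<^sub>R A x) \<le> t * normW W A"
    using gx eval normW_upper[OF A W gx(1)] t by (metis mult_left_mono)
  moreover have "t * normW W A \<le> normW W (\<lambda>x. t *\<^sub>R A x)"
    using g'x' eval normW_upper[OF tA W g'x'(1)] by metis
  ultimately show ?thesis by linarith
qed

section \<open>An abstract real part\<close>

text \<open>The properties of the real part used in the proof; they hold for the identity on the
  reals and for Re on the complex numbers.\<close>
locale real_part =
  fixes re :: "'k::real_normed_field \<Rightarrow> real"
  assumes re_add: "re (a + b) = re a + re b"
    and re_scale: "re (of_real t * z) = t * re z"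
    and re_of_real: "re (of_real t) = t"
    and re_le_norm: "re z \<le> norm z"
    and re_eq_norm: "norm z \<le> re z \<Longrightarrow> z = of_real (norm z)"
    and compact_unit_sphere: "compact (sphere (0::'k) 1)"
begin

lemma re_diff: "re (a - b) = re a - re b"
  using additive_diff[of re a b] re_add by blast

lemma re_zero: "re 0 = 0"
  using re_of_real[of 0] by simp

lemma abs_re_le_norm: "\<bar>re z\<bar> \<le> norm z"
  using re_le_norm[of z] re_le_norm[of "- z"] re_diff[of 0 z] re_diff[of 0 0] by simp

lemma continuous_re: "continuous_on UNIV re"
  unfolding continuous_on_iff
proof (intro ballI allI impI)
  fix z and e :: real assume "0 < e"
  have "dist (re w) (re z) \<le> dist w z" for w
    using abs_re_le_norm[of "w - z"] by (simp add: dist_real_def dist_norm re_diff)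
  then show "\<exists>d>0. \<forall>w\<in>UNIV. dist w z < d \<longrightarrow> dist (re w) (re z) < e"
    using \<open>0 < e\<close> by (meson le_less_trans)
qed

lemma continuous_re_rotated_eval:
  assumes ks: "K_space sm" and A: "precompact_op sm A"
  shows "continuous_map (prod_topology euclidean (B_top sm)) euclideanreal
           (\<lambda>(c, g, x). re (c * g (A x)))"
proof -
  have "continuous_map (prod_topology euclidean (B_top sm)) euclidean
          (\<lambda>p. (fst p, (\<lambda>(g, x). g (A x)) (snd p)))"
    using continuous_map_compose[OF continuous_map_snd continuous_eval_B_top[OF ks A]]
    by (auto simp: o_def simp flip: prod_topology_euclidean intro!: continuous_map_pairedI continuous_map_fst)
  moreover have "continuous_on UNIV (\<lambda>w::'k \<times> 'k. re (fst w * snd w))"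
    by (rule continuous_on_compose2[OF continuous_re]) (auto intro!: continuous_intros)
  ultimately have "continuous_map (prod_topology euclidean (B_top sm)) euclideanreal
      ((\<lambda>w. re (fst w * snd w)) \<circ> (\<lambda>p. (fst p, (\<lambda>(g, x). g (A x)) (snd p))))"
    by (intro continuous_map_compose) auto
  then show ?thesis by (simp add: o_def split_def)
qed

lemma strong_uniqueness_from_point:
  assumes SD: "precompact_op sm (\<lambda>x. S x - D x)" and W: "W \<subseteq> dual_ball sm \<times> unit_ball"
    and fx: "(f, x) \<in> WS W S" and le: "re (f (D x)) \<le> - r * normW W D"
  shows "normW W S + r * normW W D \<le> normW W (\<lambda>x. S x - D x)"
proof -
  obtain c g where f: "f = (\<lambda>y. c * g y)" and gx: "(g, x) \<in> W" and c: "norm c = 1"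
    and cS: "c * g (S x) = of_real (normW W S)"
    using fx unfolding WS_def Zset_def by auto
  have "g (S x - D x) = g (S x) - g (D x)" using W gx dual_ball_K_dual K_dual_diff by blast
  then have "re (c * g (S x - D x)) = normW W S - re (f (D x))"
    using cS re_diff re_of_real f by (simp add: right_diff_distrib)
  also have "\<dots> \<ge> normW W S + r * normW W D" using le by simp
  finally have "normW W S + r * normW W D \<le> re (c * g (S x - D x))" .
  also have "\<dots> \<le> norm (g (S x - D x))" using re_le_norm c by (metis mult_1 norm_mult)
  also have "\<dots> \<le> normW W (\<lambda>x. S x - D x)" using normW_upper[OF SD W gx] by simp
  finally show ?thesis .
qed

text \<open>Necessity, at a fixed t > 0: the inequality for S - t D, evaluated at a rotated point where
  normW (S - t D) is attained, gives an approximate point of W_S.\<close>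
lemma approximate_point:
  assumes ks: "K_space sm" and S: "precompact_op sm S" and D: "precompact_op sm D"
    and W: "W \<subseteq> dual_ball sm \<times> unit_ball" and Wc: "compactin (B_top sm) W" and Wne: "W \<noteq> {}"
    and t: "0 < t" and r: "0 \<le> r"
    and ineq: "normW W S + r * normW W (\<lambda>x. t *\<^sub>R D x) \<le> normW W (\<lambda>x. S x - t *\<^sub>R D x)"
  shows "\<exists>c g x. norm c = 1 \<and> (g, x) \<in> W \<and> re (c * g (D x)) \<le> - r * normW W D
                 \<and> normW W S - t * normW W D \<le> re (c * g (S x))"
proof -
  define N where "N = normW W S"
  define d where "d = normW W D"
  have E: "precompact_op sm (\<lambda>x. S x - t *\<^sub>R D x)"
    using precompact_op_diff[OF ks S precompact_op_scaleR[OF ks D]] .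
  obtain g x where gx: "(g, x) \<in> W" and gmax: "norm (g (S x - t *\<^sub>R D x)) = normW W (\<lambda>x. S x - t *\<^sub>R D x)"
    using normW_attained[OF ks E W Wc Wne] by auto
  have gd: "g \<in> K_dual sm" using gx W dual_ball_K_dual by blast
  define a where "a = g (S x)"
  define b where "b = g (D x)"
  define z where "z = a - of_real t * b"
  have "g (S x - t *\<^sub>R D x) = z"
    unfolding z_def a_def b_def using K_dual_diff[OF gd] K_dual_scaleR[OF ks gd] by simp
  then have z_big: "N + r * t * d \<le> norm z"
    using ineq gmax normW_scaleR[OF ks D W Wc Wne] t unfolding N_def d_def by simp
  define c where "c = (if z = 0 then 1 else of_real (norm z) / z)"
  have c: "norm c = 1" unfolding c_def by (simp add: norm_divide)
  have "re (c * z) = norm z" unfolding c_def by (simp add: re_of_real re_zero)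
  then have split: "norm z = re (c * a) - t * re (c * b)"
    unfolding z_def by (simp add: right_diff_distrib re_diff mult.left_commute[of c] re_scale)
  have "re (c * a) \<le> N"
    using re_le_norm[of "c * a"] normW_upper[OF S W gx] c unfolding a_def N_def by (simp add: norm_mult)
  moreover have "- d \<le> re (c * b)"
    using abs_re_le_norm[of "c * b"] normW_upper[OF D W gx] c unfolding b_def d_def by (simp add: norm_mult)
  ultimately have "t * re (c * b) \<le> t * (- r * d)"
    using split z_big by (auto simp: algebra_simps)
  then have b_bound: "re (c * b) \<le> - r * d" using mult_le_cancel_left_pos[OF t] by blast
  have "t * (- d) \<le> t * re (c * b)"
    using \<open>- d \<le> re (c * b)\<close> t by (intro mult_left_mono) auto
  moreover have "0 \<le> r * t * d"
    using r t order_trans[OF norm_ge_zero normW_upper[OF D W gx]] unfolding d_def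
    by (intro mult_nonneg_nonneg) auto
  ultimately have a_bound: "N - t * d \<le> re (c * a)"
    using split z_big by (auto simp: algebra_simps)
  from a_bound b_bound show ?thesis using c gx unfolding a_def b_def N_def d_def by blast
qed

lemma rotated_point_in_WS:
  assumes S: "precompact_op sm S" and W: "W \<subseteq> dual_ball sm \<times> unit_ball"
    and gx: "(g, x) \<in> W" and c: "norm c = 1" and ge: "normW W S \<le> re (c * g (S x))"
  shows "((\<lambda>y. c * g y), x) \<in> WS W S"
proof -
  have "norm (c * g (S x)) \<le> normW W S" using normW_upper[OF S W gx] c by (simp add: norm_mult)
  then have "norm (c * g (S x)) = normW W S" using re_le_norm[of "c * g (S x)"] ge by linarith
  then have "c * g (S x) = of_real (normW W S)" using re_eq_norm[of "c * g (S x)"] ge by simp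
  then show ?thesis unfolding WS_def Zset_def using gx c by auto
qed

lemma point_from_strong_uniqueness:
  assumes ks: "K_space sm" and S: "precompact_op sm S" and D: "precompact_op sm D"
    and W: "W \<subseteq> dual_ball sm \<times> unit_ball" and Wc: "compactin (B_top sm) W" and Wne: "W \<noteq> {}"
    and r: "0 \<le> r"
    and ineq: "\<And>t. 0 < t \<Longrightarrow> t \<le> 1 \<Longrightarrow>
                 normW W S + r * normW W (\<lambda>x. t *\<^sub>R D x) \<le> normW W (\<lambda>x. S x - t *\<^sub>R D x)"
  shows "\<exists>(f, x) \<in> WS W S. re (f (D x)) \<le> - r * normW W D"
proof -
  define N where "N = normW W S"
  define d where "d = normW W D"
  define F where "F = (\<lambda>(c, g, x). min (- r * d - re (c * g (D x))) (re (c * g (S x)) - N))"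
  have d: "0 \<le> d" unfolding d_def using normW_attained[OF ks D W Wc Wne] by auto (metis norm_ge_zero)
  have K: "compactin (prod_topology euclidean (B_top sm)) (sphere (0::'k) 1 \<times> W)"
    using compact_unit_sphere Wc by (simp add: compactin_Times)
  have "continuous_map (prod_topology euclidean (B_top sm)) euclideanreal F"
    using continuous_re_rotated_eval[OF ks D] continuous_re_rotated_eval[OF ks S]
    unfolding F_def case_prod_beta by (intro continuous_intros) auto
  moreover have "\<exists>p \<in> sphere 0 1 \<times> W. - \<epsilon> \<le> F p" if "0 < \<epsilon>" for \<epsilon>
  proof -
    define t where "t = min 1 (\<epsilon> / (d + 1))"
    have t: "0 < t" "t \<le> 1" "t * d \<le> \<epsilon>"
      using that d by (auto simp: t_def min_def field_simps mult_left_le)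
    obtain c g x where "norm c = 1" "(g, x) \<in> W" "re (c * g (D x)) \<le> - r * d"
      "N - t * d \<le> re (c * g (S x))"
      using approximate_point[OF ks S D W Wc Wne t(1) r ineq[OF t(1,2)]] unfolding N_def d_def by blast
    then show ?thesis using t d that by (intro bexI[of _ "(c, g, x)"]) (auto simp: F_def)
  qed
  moreover have "sphere (0::'k) 1 \<times> W \<noteq> {}" using Wne by (auto intro: exI[of _ 1])
  ultimately obtain p where p: "p \<in> sphere 0 1 \<times> W" "0 \<le> F p"
    using compactin_nonneg_value[OF K] by blast
  then obtain c g x where c: "norm c = 1" and gx: "(g, x) \<in> W"
    and D_bound: "re (c * g (D x)) \<le> - r * d" and S_bound: "N \<le> re (c * g (S x))"
    unfolding F_def by (cases p) auto
  have "((\<lambda>y. c * g y), x) \<in> WS W S"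
    using rotated_point_in_WS[OF S W gx c] S_bound unfolding N_def .
  then show ?thesis using D_bound unfolding d_def by (intro bexI[of _ "((\<lambda>y. c * g y), x)"]) auto
qed

text \<open>The theorem for a scalar field with a real part functional.  The convex combinations
  t U + (1 - t) L differ from T by S - t D, with S = T - L and D = U - L.\<close>
theorem strong_uniqueness_iff:
  fixes sm :: "'k \<Rightarrow> 'a::banach \<Rightarrow> 'a"
  assumes setting: "thm_setting sm W \<U> T L r"
  shows "(\<forall>U\<in>\<U>. normW W (\<lambda>x. T x - U x) \<ge> normW W (\<lambda>x. T x - L x) + r * normW W (\<lambda>x. U x - L x))
     \<longleftrightarrow> (\<forall>U\<in>\<U>. \<exists>(f, x) \<in> WS W (\<lambda>x. T x - L x). re (f (U x - L x)) \<le> - r * normW W (\<lambda>x. U x - L x))"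
proof -
  from setting have ks: "K_space sm" and Wne: "W \<noteq> {}" and W: "W \<subseteq> dual_ball sm \<times> unit_ball"
    and Wc: "compactin (B_top sm) W" and ops: "\<And>U. U \<in> \<U> \<Longrightarrow> precompact_op sm U"
    and conv: "\<And>A B t. A \<in> \<U> \<Longrightarrow> B \<in> \<U> \<Longrightarrow> 0 \<le> t \<Longrightarrow> t \<le> 1 \<Longrightarrow> (\<lambda>x. t *\<^sub>R A x + (1 - t) *\<^sub>R B x) \<in> \<U>"
    and T: "precompact_op sm T" and L: "L \<in> \<U>" and r: "0 < r"
    unfolding thm_setting_def by (auto intro: compact_op_precompact)
  define S where "S = (\<lambda>x. T x - L x)"
  have S: "precompact_op sm S" unfolding S_def using precompact_op_diff[OF ks T ops[OF L]] .
  have D: "precompact_op sm (\<lambda>x. U x - L x)" if "U \<in> \<U>" for U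
    using precompact_op_diff[OF ks ops[OF that] ops[OF L]] .
  have segment: "(\<lambda>x. T x - (t *\<^sub>R U x + (1 - t) *\<^sub>R L x)) = (\<lambda>x. S x - t *\<^sub>R (U x - L x))"
    "(\<lambda>x. (t *\<^sub>R U x + (1 - t) *\<^sub>R L x) - L x) = (\<lambda>x. t *\<^sub>R (U x - L x))" for U t
    unfolding S_def by (auto simp: algebra_simps)
  have TU: "(\<lambda>x. T x - U x) = (\<lambda>x. S x - (U x - L x))" for U unfolding S_def by simp
  show ?thesis unfolding S_def[symmetric]
  proof (intro iffI ballI)
    fix U assume H: "\<forall>U\<in>\<U>. normW W S + r * normW W (\<lambda>x. U x - L x) \<le> normW W (\<lambda>x. T x - U x)"
      and U: "U \<in> \<U>"
    have "normW W S + r * normW W (\<lambda>x. t *\<^sub>R (U x - L x)) \<le> normW W (\<lambda>x. S x - t *\<^sub>R (U x - L x))"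
      if "0 < t" "t \<le> 1" for t
      using H conv[OF U L, of t] that segment[of t U] by auto
    then show "\<exists>(f, x) \<in> WS W S. re (f (U x - L x)) \<le> - r * normW W (\<lambda>x. U x - L x)"
      using point_from_strong_uniqueness[OF ks S D[OF U] W Wc Wne] r by simp
  next
    fix U assume H: "\<forall>U\<in>\<U>. \<exists>(f, x) \<in> WS W S. re (f (U x - L x)) \<le> - r * normW W (\<lambda>x. U x - L x)"
      and U: "U \<in> \<U>"
    then obtain f x where "(f, x) \<in> WS W S" "re (f (U x - L x)) \<le> - r * normW W (\<lambda>x. U x - L x)"
      by blast
    then show "normW W S + r * normW W (\<lambda>x. U x - L x) \<le> normW W (\<lambda>x. T x - U x)"
      using strong_uniqueness_from_point[OF _ W] precompact_op_diff[OF ks S D[OF U]] TU[of U] by simp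
  qed
qed

end

interpretation real_scalars: real_part "\<lambda>z::real. z"
  by unfold_locales (auto simp: compact_sphere)

lemma complex_eq_of_real_cmod: "cmod z \<le> Re z \<Longrightarrow> z = complex_of_real (cmod z)"
  using complex_Re_le_cmod[of z] cmod_power2[of z] by (simp add: complex_eq_iff)

interpretation complex_scalars: real_part Re
  by unfold_locales (auto simp: compact_sphere complex_Re_le_cmod intro: complex_eq_of_real_cmod)

theorem theorem2p3:
  fixes smC :: "complex \<Rightarrow> 'b::banach \<Rightarrow> 'b"
  shows
  "(\<forall>(W :: (('a::banach \<Rightarrow> real) \<times> 'a) set) \<U> T L r.
      thm_setting (scaleR :: real \<Rightarrow> 'a \<Rightarrow> 'a) W \<U> T L r \<longrightarrow>
      ((\<forall>U\<in>\<U>. normW W (\<lambda>x. T x - U x) \<ge> normW W (\<lambda>x. T x - L x) + r * normW W (\<lambda>x. U x - L x))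
       \<longleftrightarrow>
       (\<forall>U\<in>\<U>. \<exists>(f, x) \<in> WS W (\<lambda>x. T x - L x).
          f (U x - L x) \<le> - r * normW W (\<lambda>x. U x - L x))))
   \<and>
   (\<forall>(W :: (('b \<Rightarrow> complex) \<times> 'b) set) \<U> T L r.
      thm_setting smC W \<U> T L r \<longrightarrow>
      ((\<forall>U\<in>\<U>. normW W (\<lambda>x. T x - U x) \<ge> normW W (\<lambda>x. T x - L x) + r * normW W (\<lambda>x. U x - L x))
       \<longleftrightarrow>
       (\<forall>U\<in>\<U>. \<exists>(f, x) \<in> WS W (\<lambda>x. T x - L x).
          Re (f (U x - L x)) \<le> - r * normW W (\<lambda>x. U x - L x))))"
  by (intro conjI allI impI)
     (erule real_scalars.strong_uniqueness_iff complex_scalars.strong_uniqueness_iff)+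

end
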